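(* Let $B$ be a finite set (of "bath spins"), and introduce commuting indeterminates $b_{i,j}=b_{j,i}$ for distinct $i,j\in B$. For every subset $\mathcal S\subseteq B$ let $L_{\mathcal S}$ be a formal power series in the variables $\{b_{i,j}: i,j\in\mathcal S,\ i\neq j\}$ (with complex coefficients, which may depend on additional parameters such as a time $t$) whose constant term is nonzero. Define $\tilde L_{\mathcal S}$ recursively for all $\mathcal S\subseteq B$ by $\tilde L_{\mathcal S}=L_{\mathcal S}/\prod_{\mathcal C\subsetneq \mathcal S}\tilde L_{\mathcal C}$. Suppose that for every $\mathcal S\subseteq B$ and all subsets $\mathcal X,\mathcal Y\subseteq\mathcal S$ with $\mathcal X\cup\mathcal Y=\mathcal S$ and $\mathcal X\cap\mathcal Y=\emptyset$, setting $b_{i,j}=0$ for all $i\in\mathcal X$, $j\in\mathcal Y$ in $L_{\mathcal S}$ yields $L_{\mathcal X}L_{\mathcal Y}$. Then for every $\mathcal C\subseteq B$ with $k=|\mathcal C|\ge 1$, $\tilde L_{\mathcal C}$ equals a constant plus terms of total degree at least $k-1$ in the variables $b_{i,j}$; that is, $\tilde L_{\mathcal C}=\mathrm{const}+O(b_{i,j}^{k-1})$ (in the paper's physical setting where each $b_{i,j}$ is accompanied by a factor of time $t$, $\tilde L_{\mathcal C}=\mathrm{const}+O(b_{i,j}^{k-1}t^{k-1})$).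
   Context: Quotients and products are in the ring of formal power series; they are well defined since all constant terms are nonzero. The hypothesis on setting cross couplings to zero is called "factorable under disconnected interactions". *)

theory Defs
  imports Complex_Main "HOL-Library.Poly_Mapping" "HOL-Library.FuncSet"
begin

text \<open>A monomial is a finitely supported exponent
vector (poly_mapping to nat); a series is its coefficient function.\<close>

type_synonym 'v mps = "('v \<Rightarrow>\<^sub>0 nat) \<Rightarrow> complex"

definition mono_deg :: "('v \<Rightarrow>\<^sub>0 nat) \<Rightarrow> nat" where
  "mono_deg m = (\<Sum>v\<in>Poly_Mapping.keys m. Poly_Mapping.lookup m v)"

definition mps_one :: "'v mps" where
  "mps_one m = (if m = 0 then 1 else 0)"

definition mps_mult :: "'v mps \<Rightarrow> 'v mps \<Rightarrow> 'v mps" where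
  "mps_mult f g m = (\<Sum>(p, q)\<in>{(p, q). p + q = m}. f p * g q)"

definition mps_prod :: "'i set \<Rightarrow> ('i \<Rightarrow> 'v mps) \<Rightarrow> 'v mps" where
  "mps_prod I F m =
     (\<Sum>P\<in>{P. P \<in> I \<rightarrow>\<^sub>E UNIV \<and> (\<Sum>i\<in>I. P i) = m}. \<Prod>i\<in>I. F i (P i))"

text \<open>Multiplicative inverse (exists uniquely when the constant term is nonzero).\<close>
definition mps_inverse :: "'v mps \<Rightarrow> 'v mps" where
  "mps_inverse f = (THE g. mps_mult f g = mps_one)"

definition mps_div :: "'v mps \<Rightarrow> 'v mps \<Rightarrow> 'v mps" where
  "mps_div f g = mps_mult f (mps_inverse g)"

definition mps_zero_vars :: "'v set \<Rightarrow> 'v mps \<Rightarrow> 'v mps" where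
  "mps_zero_vars V f m = (if Poly_Mapping.keys m \<inter> V = {} then f m else 0)"

text \<open>Coupling variables b_ij = b_ji, i \<noteq> j, are indexed by two-element sets.\<close>
definition pair_vars :: "'a set \<Rightarrow> 'a set set" where
  "pair_vars S = {e. e \<subseteq> S \<and> card e = 2}"

definition cross_vars :: "'a set \<Rightarrow> 'a set \<Rightarrow> 'a set set" where
  "cross_vars X Y = {{i, j} | i j. i \<in> X \<and> j \<in> Y \<and> i \<noteq> j}"

definition mps_vars_in :: "'v set \<Rightarrow> 'v mps \<Rightarrow> bool" where
  "mps_vars_in V f \<longleftrightarrow> (\<forall>m. f m \<noteq> 0 \<longrightarrow> Poly_Mapping.keys m \<subseteq> V)"

end

theory Submission
  imports Defs
begin

text \<open>Every L S is the product of the Lt C over all C \<subseteq> S. By induction on the size of S,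
  cutting all couplings between the two sides of a nontrivial partition S = X \<union> Y turns Lt S
  into a constant: the factorisation hypothesis turns L S into L X * L Y, which cancels against
  the factors Lt C with C \<subseteq> X or C \<subseteq> Y, while the remaining factors with C \<noteq> S straddle
  the cut and are constant by induction. Hence the variables of every non-constant monomial of
  Lt C couple the two sides of every cut of C, i.e. they are the edges of a connected graph on C,
  and such a graph has at least card C - 1 edges.\<close>

section \<open>Multivariate formal power series\<close>

lemma keys_add_nat:
  "Poly_Mapping.keys ((p :: 'v \<Rightarrow>\<^sub>0 nat) + q) = Poly_Mapping.keys p \<union> Poly_Mapping.keys q"
  by (auto simp: in_keys_iff lookup_add)

lemma poly_mapping_nat_add_eq_0_iff:
  "(p :: 'v \<Rightarrow>\<^sub>0 nat) + q = 0 \<longleftrightarrow> p = 0 \<and> q = 0"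
  by (auto simp: poly_mapping_eq_iff lookup_add fun_eq_iff)

lemma mono_deg_add: "mono_deg (p + q) = mono_deg p + mono_deg q"
  unfolding mono_deg_def by (rule setsum_keys_plus_distrib[where f = "\<lambda>_ x. x"]) simp_all

lemma lookup_le_mono_deg: "Poly_Mapping.lookup m v \<le> mono_deg m"
  unfolding mono_deg_def
  by (cases "v \<in> Poly_Mapping.keys m") (auto intro: member_le_sum simp: in_keys_iff)

lemma card_keys_le_mono_deg: "card (Poly_Mapping.keys m) \<le> mono_deg m"
proof -
  have "card (Poly_Mapping.keys m) = (\<Sum>v\<in>Poly_Mapping.keys m. 1)"
    by simp
  also have "\<dots> \<le> mono_deg m"
    unfolding mono_deg_def by (rule sum_mono) (auto simp: in_keys_iff)
  finally show ?thesis .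
qed

lemma mono_deg_pos: "m \<noteq> 0 \<Longrightarrow> 0 < mono_deg m"
  using card_keys_le_mono_deg[of m] by (metis card_gt_0_iff finite_keys keys_eq_empty order.strict_trans2)

definition mono_divisors :: "('v \<Rightarrow>\<^sub>0 nat) \<Rightarrow> ('v \<Rightarrow>\<^sub>0 nat) set" where
  "mono_divisors m = {p. \<forall>v. Poly_Mapping.lookup p v \<le> Poly_Mapping.lookup m v}"

lemma finite_mono_divisors: "finite (mono_divisors m)"
proof -
  let ?K = "Poly_Mapping.keys m"
  have "Poly_Mapping.lookup ` mono_divisors m \<subseteq>
      {f. \<forall>v. (v \<in> ?K \<longrightarrow> f v \<in> {..mono_deg m}) \<and> (v \<notin> ?K \<longrightarrow> f v = 0)}"
    by (auto simp: mono_divisors_def in_keys_iff intro: order.trans lookup_le_mono_deg)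
      (metis le_zero_eq)
  moreover have "finite {f. \<forall>v. (v \<in> ?K \<longrightarrow> f v \<in> {..mono_deg m}) \<and> (v \<notin> ?K \<longrightarrow> f v = (0::nat))}"
    by (rule finite_set_of_finite_funs) auto
  ultimately have "finite (Poly_Mapping.lookup ` mono_divisors m)"
    by (rule finite_subset)
  then show ?thesis
    by (rule finite_imageD) (simp add: inj_on_def)
qed

definition mono_splits :: "('v \<Rightarrow>\<^sub>0 nat) \<Rightarrow> (('v \<Rightarrow>\<^sub>0 nat) \<times> ('v \<Rightarrow>\<^sub>0 nat)) set" where
  "mono_splits m = {(p, q). p + q = m}"

lemma mem_mono_splits [simp]: "x \<in> mono_splits m \<longleftrightarrow> fst x + snd x = m"
  by (cases x) (simp add: mono_splits_def)

lemma finite_mono_splits: "finite (mono_splits m)"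
proof -
  have "mono_splits m \<subseteq> mono_divisors m \<times> mono_divisors m"
    by (auto simp: mono_divisors_def lookup_add)
  then show ?thesis
    by (rule finite_subset) (simp add: finite_mono_divisors)
qed

lemma mono_splits_0: "mono_splits 0 = {(0, 0)}"
  by (auto simp: poly_mapping_nat_add_eq_0_iff)

lemma mps_mult_eq_sum_splits: "mps_mult f g m = (\<Sum>x\<in>mono_splits m. f (fst x) * g (snd x))"
  unfolding mps_mult_def mono_splits_def by (auto intro!: sum.cong)

lemma mps_mult_at_0: "mps_mult f g 0 = f 0 * g 0"
  by (simp add: mps_mult_eq_sum_splits mono_splits_0)

lemma mps_mult_assoc:
  fixes f g h :: "'v mps"
  shows "mps_mult (mps_mult f g) h = mps_mult f (mps_mult g h)"
proof
  fix m
  let ?T = "{x :: ('v \<Rightarrow>\<^sub>0 nat) \<times> _ \<times> _. fst x + fst (snd x) + snd (snd x) = m}"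
  have "mps_mult (mps_mult f g) h m =
      (\<Sum>z\<in>Sigma (mono_splits m) (\<lambda>x. mono_splits (fst x)).
         f (fst (snd z)) * g (snd (snd z)) * h (snd (fst z)))"
    by (simp add: mps_mult_eq_sum_splits sum_distrib_right sum.Sigma finite_mono_splits case_prod_beta)
  also have "\<dots> = (\<Sum>x\<in>?T. f (fst x) * g (fst (snd x)) * h (snd (snd x)))"
    by (rule sum.reindex_bij_witness[where i = "\<lambda>x. ((fst x + fst (snd x), snd (snd x)), (fst x, fst (snd x)))"
          and j = "\<lambda>z. (fst (snd z), snd (snd z), snd (fst z))"]) auto
  also have "\<dots> = (\<Sum>z\<in>Sigma (mono_splits m) (\<lambda>x. mono_splits (snd x)).
         f (fst (fst z)) * g (fst (snd z)) * h (snd (snd z)))"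
    by (rule sum.reindex_bij_witness[where i = "\<lambda>z. (fst (fst z), fst (snd z), snd (snd z))"
          and j = "\<lambda>x. ((fst x, fst (snd x) + snd (snd x)), (fst (snd x), snd (snd x)))"])
      (auto simp: add.assoc)
  also have "\<dots> = mps_mult f (mps_mult g h) m"
    by (simp add: mps_mult_eq_sum_splits sum_distrib_left sum.Sigma finite_mono_splits case_prod_beta mult.assoc)
  finally show "mps_mult (mps_mult f g) h m = mps_mult f (mps_mult g h) m" .
qed

lemma mps_mult_commute: "mps_mult f g = mps_mult g f"
proof
  fix m
  show "mps_mult f g m = mps_mult g f m"
    unfolding mps_mult_eq_sum_splits
    by (rule sum.reindex_bij_witness[where i = prod.swap and j = prod.swap]) (auto simp: add.commute)
qed

lemma mps_mult_one_right: "mps_mult f mps_one = f"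
proof
  fix m
  have "mps_mult f mps_one m = (\<Sum>x\<in>mono_splits m. if x = (m, 0) then f m else 0)"
    unfolding mps_mult_eq_sum_splits by (rule sum.cong) (auto simp: mps_one_def)
  also have "\<dots> = f m"
    by (simp add: finite_mono_splits)
  finally show "mps_mult f mps_one m = f m" .
qed

lemma mps_mult_one_left: "mps_mult mps_one f = f"
  by (simp add: mps_mult_commute[of mps_one f] mps_mult_one_right)

interpretation mps_prod_fin: comm_monoid_set mps_mult mps_one
  by unfold_locales (fact mps_mult_assoc mps_mult_commute mps_mult_one_right)+

lemma mps_mult_left_commute: "mps_mult f (mps_mult g h) = mps_mult g (mps_mult f h)"
  by (metis mps_mult_assoc mps_mult_commute)

lemmas mps_mult_ac = mps_mult_assoc mps_mult_commute mps_mult_left_commute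

definition mono_partitions :: "'i set \<Rightarrow> ('v \<Rightarrow>\<^sub>0 nat) \<Rightarrow> ('i \<Rightarrow> ('v \<Rightarrow>\<^sub>0 nat)) set" where
  "mono_partitions I m = {P. P \<in> I \<rightarrow>\<^sub>E UNIV \<and> (\<Sum>i\<in>I. P i) = m}"

lemma mps_prod_eq_sum_partitions:
  "mps_prod I F m = (\<Sum>P\<in>mono_partitions I m. \<Prod>i\<in>I. F i (P i))"
  unfolding mps_prod_def mono_partitions_def ..

lemma finite_mono_partitions:
  assumes "finite I"
  shows "finite (mono_partitions I m)"
proof (rule finite_subset)
  show "mono_partitions I m \<subseteq> I \<rightarrow>\<^sub>E mono_divisors m"
  proof
    fix P assume P: "P \<in> mono_partitions I m"
    have "Poly_Mapping.lookup (P j) v \<le> Poly_Mapping.lookup m v" if "j \<in> I" for j v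
    proof -
      have "Poly_Mapping.lookup (P j) v \<le> (\<Sum>k\<in>I. Poly_Mapping.lookup (P k) v)"
        using assms that by (intro member_le_sum) auto
      also have "\<dots> = Poly_Mapping.lookup m v"
        using P by (simp add: mono_partitions_def lookup_sum[symmetric])
      finally show ?thesis .
    qed
    with P show "P \<in> I \<rightarrow>\<^sub>E mono_divisors m"
      by (auto simp: mono_partitions_def mono_divisors_def)
  qed
  show "finite (I \<rightarrow>\<^sub>E mono_divisors m)"
    using assms by (simp add: finite_PiE finite_mono_divisors)
qed

lemma mps_prod_empty: "mps_prod {} (F :: 'i \<Rightarrow> 'v mps) = mps_one"
proof
  fix m :: "'v \<Rightarrow>\<^sub>0 nat"
  have partitions: "mono_partitions {} m = (if m = 0 then {\<lambda>_. undefined} else {})"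
    by (auto simp: mono_partitions_def)
  show "mps_prod {} F m = mps_one m"
    unfolding mps_prod_eq_sum_partitions partitions mps_one_def by simp
qed

lemma mps_prod_insert:
  fixes F :: "'i \<Rightarrow> 'v mps"
  assumes fin: "finite I" and i: "i \<notin> I"
  shows "mps_prod (insert i I) F = mps_mult (F i) (mps_prod I F)"
proof
  fix m :: "'v \<Rightarrow>\<^sub>0 nat"
  let ?split = "\<lambda>P. ((P i, \<Sum>j\<in>I. P j), restrict P I)"
  let ?join = "\<lambda>z. (snd z)(i := fst (fst z))"
  have "mps_mult (F i) (mps_prod I F) m =
      (\<Sum>z\<in>Sigma (mono_splits m) (\<lambda>x. mono_partitions I (snd x)).
         F i (fst (fst z)) * (\<Prod>j\<in>I. F j (snd z j)))"
    by (simp add: mps_mult_eq_sum_splits mps_prod_eq_sum_partitions sum_distrib_left sum.Sigma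
        finite_mono_splits finite_mono_partitions fin case_prod_beta)
  also have "\<dots> = mps_prod (insert i I) F m"
    unfolding mps_prod_eq_sum_partitions
  proof (rule sum.reindex_bij_witness[where i = ?split and j = ?join])
    fix z assume "z \<in> Sigma (mono_splits m) (\<lambda>x. mono_partitions I (snd x))"
    then have z: "snd z \<in> I \<rightarrow>\<^sub>E UNIV" "(\<Sum>j\<in>I. snd z j) = snd (fst z)"
      "fst (fst z) + snd (fst z) = m"
      by (auto simp: mono_partitions_def)
    have on_I: "(\<Sum>j\<in>I. ?join z j) = (\<Sum>j\<in>I. snd z j)" "restrict (?join z) I = snd z"
      "(\<Prod>j\<in>I. F j (?join z j)) = (\<Prod>j\<in>I. F j (snd z j))"
      using i z(1) by (auto intro!: sum.cong prod.cong simp: restrict_def fun_eq_iff PiE_def extensional_def)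
    show "?split (?join z) = z"
      using on_I z(2) by (cases z) auto
    show "?join z \<in> mono_partitions (insert i I) m"
      using z on_I fin i by (auto simp: mono_partitions_def PiE_def extensional_def)
    show "(\<Prod>j\<in>insert i I. F j (?join z j)) = F i (fst (fst z)) * (\<Prod>j\<in>I. F j (snd z j))"
      using on_I fin i by simp
  next
    fix P assume "P \<in> mono_partitions (insert i I) m"
    then have P: "P \<in> insert i I \<rightarrow>\<^sub>E UNIV" "(\<Sum>j\<in>insert i I. P j) = m"
      by (auto simp: mono_partitions_def)
    then show "?join (?split P) = P"
      by (auto simp: fun_eq_iff PiE_def extensional_def)
    have "(\<Sum>j\<in>I. restrict P I j) = (\<Sum>j\<in>I. P j)"
      by (rule sum.cong) auto
    then show "?split P \<in> Sigma (mono_splits m) (\<lambda>x. mono_partitions I (snd x))"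
      using P fin i by (auto simp: mono_partitions_def)
  qed
  finally show "mps_prod (insert i I) F m = mps_mult (F i) (mps_prod I F) m" ..
qed

lemma mps_prod_eq_prod_fin: "finite I \<Longrightarrow> mps_prod I F = mps_prod_fin.F F I"
  by (induction I rule: finite_induct) (simp_all add: mps_prod_empty mps_prod_insert)

lemma mps_prod_fin_at_0: "finite I \<Longrightarrow> mps_prod_fin.F F I 0 = (\<Prod>i\<in>I. F i 0)"
  by (induction I rule: finite_induct) (simp_all add: mps_mult_at_0 mps_one_def)

text \<open>The inverse is computed degree by degree, solving the coefficient of m in g * h = 1
  for h m; the recursion terminates since the remaining monomials have smaller degree.\<close>
function mps_inverse_rec :: "'v mps \<Rightarrow> ('v \<Rightarrow>\<^sub>0 nat) \<Rightarrow> complex" where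
  "mps_inverse_rec g m = (if m = 0 then 1 / g 0
     else - (\<Sum>x\<in>{x \<in> mono_splits m. fst x \<noteq> 0}. g (fst x) * mps_inverse_rec g (snd x)) / g 0)"
  by pat_completeness auto
termination
proof (relation "measure (\<lambda>(g, m). mono_deg m)")
  fix g :: "'v mps" and m x
  assume "x \<in> {x \<in> mono_splits m. fst x \<noteq> 0}"
  then show "((g, snd x), g, m) \<in> measure (\<lambda>(g, m). mono_deg m)"
    using mono_deg_pos[of "fst x"] mono_deg_add[of "fst x" "snd x"] by auto
qed auto

declare mps_inverse_rec.simps [simp del]

lemma mps_mult_inverse_rec:
  fixes g :: "'v mps"
  assumes g0: "g 0 \<noteq> 0"
  shows "mps_mult g (mps_inverse_rec g) = mps_one"
proof
  fix m :: "'v \<Rightarrow>\<^sub>0 nat"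
  have split_0: "(0, m) \<in> mono_splits m"
    and splits_rest: "mono_splits m - {(0, m)} = {x \<in> mono_splits m. fst x \<noteq> 0}"
    by auto
  have "mps_mult g (mps_inverse_rec g) m = g 0 * mps_inverse_rec g m +
      (\<Sum>x\<in>{x \<in> mono_splits m. fst x \<noteq> 0}. g (fst x) * mps_inverse_rec g (snd x))"
    unfolding mps_mult_eq_sum_splits sum.remove[OF finite_mono_splits split_0] splits_rest by simp
  also have "\<dots> = mps_one m"
  proof (cases "m = 0")
    case True
    show ?thesis
      unfolding True using g0 by (subst mps_inverse_rec.simps) (simp add: mono_splits_0 mps_one_def)
  next
    case False
    then show ?thesis
      using g0 by (subst mps_inverse_rec.simps) (simp add: mps_one_def)
  qed
  finally show "mps_mult g (mps_inverse_rec g) m = mps_one m" .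
qed

lemma mps_right_inverse_unique:
  assumes "mps_mult g h = mps_one" and "mps_mult g h' = mps_one"
  shows "h = h'"
proof -
  have "h = mps_mult (mps_mult g h') h"
    using assms(2) by (simp add: mps_mult_commute mps_mult_one_right)
  also have "\<dots> = mps_mult (mps_mult g h) h'"
    by (simp only: mps_mult_ac)
  finally show ?thesis
    using assms(1) by (simp add: mps_mult_commute mps_mult_one_right)
qed

lemma mps_mult_inverse: "g 0 \<noteq> 0 \<Longrightarrow> mps_mult g (mps_inverse g) = mps_one"
  unfolding mps_inverse_def
  by (rule theI[of _ "mps_inverse_rec g"]) (auto intro: mps_mult_inverse_rec mps_right_inverse_unique)

lemma mps_mult_cancel_left:
  assumes "g 0 \<noteq> 0" and "mps_mult g f = mps_mult g f'"
  shows "f = f'"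
proof -
  have "mps_mult (mps_inverse g) (mps_mult g f) = mps_mult (mps_inverse g) (mps_mult g f')"
    using assms(2) by simp
  then show ?thesis
    using mps_mult_inverse[of g, OF assms(1)]
    by (simp add: mps_mult_assoc[symmetric] mps_mult_commute[of "mps_inverse g"])
qed

section \<open>Setting variables to zero\<close>

lemma mps_zero_vars_mult:
  "mps_zero_vars V (mps_mult f g) = mps_mult (mps_zero_vars V f) (mps_zero_vars V g)"
proof
  fix m
  show "mps_zero_vars V (mps_mult f g) m = mps_mult (mps_zero_vars V f) (mps_zero_vars V g) m"
  proof (cases "Poly_Mapping.keys m \<inter> V = {}")
    case True
    then have "Poly_Mapping.keys (fst x) \<inter> V = {} \<and> Poly_Mapping.keys (snd x) \<inter> V = {}"
      if "x \<in> mono_splits m" for x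
      using that by (auto simp: keys_add_nat)
    with True show ?thesis
      unfolding mps_mult_eq_sum_splits by (auto simp: mps_zero_vars_def intro!: sum.cong)
  next
    case False
    then have "Poly_Mapping.keys (fst x) \<inter> V \<noteq> {} \<or> Poly_Mapping.keys (snd x) \<inter> V \<noteq> {}"
      if "x \<in> mono_splits m" for x
      using that by (auto simp: keys_add_nat)
    then have "mps_mult (mps_zero_vars V f) (mps_zero_vars V g) m = 0"
      unfolding mps_mult_eq_sum_splits by (intro sum.neutral ballI) (auto simp: mps_zero_vars_def)
    with False show ?thesis
      by (simp add: mps_zero_vars_def)
  qed
qed

lemma mps_zero_vars_one: "mps_zero_vars V mps_one = mps_one"
  by (simp add: mps_zero_vars_def mps_one_def fun_eq_iff)

lemma mps_zero_vars_prod_fin: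
  "finite I \<Longrightarrow> mps_zero_vars V (mps_prod_fin.F F I) = mps_prod_fin.F (\<lambda>i. mps_zero_vars V (F i)) I"
  by (induction I rule: finite_induct) (simp_all add: mps_zero_vars_one mps_zero_vars_mult)

lemma mps_vars_in_iff_zero_vars: "mps_vars_in V f \<longleftrightarrow> mps_zero_vars (- V) f = f"
  by (auto simp: mps_vars_in_def mps_zero_vars_def fun_eq_iff)

lemma mps_vars_in_mono: "mps_vars_in V f \<Longrightarrow> V \<subseteq> W \<Longrightarrow> mps_vars_in W f"
  by (auto simp: mps_vars_in_def)

lemma mps_vars_in_mult: "mps_vars_in V f \<Longrightarrow> mps_vars_in V g \<Longrightarrow> mps_vars_in V (mps_mult f g)"
  by (simp add: mps_vars_in_iff_zero_vars mps_zero_vars_mult)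

lemma mps_vars_in_prod_fin:
  "finite I \<Longrightarrow> (\<And>i. i \<in> I \<Longrightarrow> mps_vars_in V (F i)) \<Longrightarrow> mps_vars_in V (mps_prod_fin.F F I)"
  by (simp add: mps_vars_in_iff_zero_vars mps_zero_vars_prod_fin cong: mps_prod_fin.cong)

text \<open>Setting the variables outside V to zero is multiplicative, so it maps the inverse
  of g to another inverse of g.\<close>
lemma mps_vars_in_inverse:
  assumes g: "mps_vars_in V g" and g0: "g 0 \<noteq> 0"
  shows "mps_vars_in V (mps_inverse g)"
proof -
  have "mps_mult g (mps_zero_vars (- V) (mps_inverse g)) = mps_one"
    using g mps_zero_vars_mult[of "- V" g "mps_inverse g"] mps_mult_inverse[of g, OF g0]
    by (simp add: mps_vars_in_iff_zero_vars mps_zero_vars_one)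
  then show ?thesis
    using mps_right_inverse_unique mps_mult_inverse[of g, OF g0]
    by (auto simp: mps_vars_in_iff_zero_vars)
qed

lemma mps_zero_vars_cong:
  assumes "mps_vars_in V f" and "W \<inter> V = W' \<inter> V"
  shows "mps_zero_vars W f = mps_zero_vars W' f"
proof
  fix m
  have "f m \<noteq> 0 \<Longrightarrow> Poly_Mapping.keys m \<inter> W = Poly_Mapping.keys m \<inter> W'"
    using assms by (auto simp: mps_vars_in_def)
  then show "mps_zero_vars W f m = mps_zero_vars W' f m"
    by (auto simp: mps_zero_vars_def)
qed

lemma mps_zero_vars_eq_self: "mps_vars_in V f \<Longrightarrow> W \<inter> V = {} \<Longrightarrow> mps_zero_vars W f = f"
  using mps_zero_vars_cong[of V f W "{}"] by (simp add: mps_zero_vars_def fun_eq_iff)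

definition mps_const :: "'v mps \<Rightarrow> bool" where
  "mps_const f \<longleftrightarrow> (\<forall>m. m \<noteq> 0 \<longrightarrow> f m = 0)"

lemma mps_mult_const_left:
  assumes "mps_const f"
  shows "mps_mult f g m = f 0 * g m"
proof -
  have split_0: "(0, m) \<in> mono_splits m"
    by simp
  have "f (fst x) * g (snd x) = 0" if "x \<in> mono_splits m - {(0, m)}" for x
    using that assms by (cases x) (auto simp: mps_const_def)
  then show ?thesis
    unfolding mps_mult_eq_sum_splits sum.remove[OF finite_mono_splits split_0]
    by (simp add: sum.neutral)
qed

lemma mps_const_mult: "mps_const f \<Longrightarrow> mps_const g \<Longrightarrow> mps_const (mps_mult f g)"
  by (simp add: mps_const_def mps_mult_const_left)

lemma mps_const_one: "mps_const mps_one"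
  by (simp add: mps_const_def mps_one_def)

lemma mps_const_prod_fin:
  "finite I \<Longrightarrow> (\<And>i. i \<in> I \<Longrightarrow> mps_const (F i)) \<Longrightarrow> mps_const (mps_prod_fin.F F I)"
  by (induction I rule: finite_induct) (simp_all add: mps_const_one mps_const_mult)

lemma mps_const_if_mult_const_eq_one:
  assumes "mps_const c" and "mps_mult c f = mps_one"
  shows "mps_const f"
proof -
  have "c 0 * f m = mps_one m" for m
    using assms mps_mult_const_left by metis
  then show ?thesis
    by (metis mps_const_def mps_one_def mult_eq_0_iff zero_neq_one)
qed

section \<open>Connected series\<close>

definition is_cut :: "'a set \<Rightarrow> 'a set \<Rightarrow> 'a set \<Rightarrow> bool" where
  "is_cut S X Y \<longleftrightarrow> X \<union> Y = S \<and> X \<inter> Y = {} \<and> X \<noteq> {} \<and> Y \<noteq> {}"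

definition crosses_all_cuts :: "'a set set \<Rightarrow> 'a set \<Rightarrow> bool" where
  "crosses_all_cuts E S \<longleftrightarrow> (\<forall>X Y. is_cut S X Y \<longrightarrow> E \<inter> cross_vars X Y \<noteq> {})"

text \<open>A connected graph on S has at least card S - 1 edges: grow a tree from a vertex,
  each time adding an edge that leaves the current vertex set.\<close>
lemma card_le_card_if_crosses_all_cuts:
  assumes fin_S: "finite S" and fin_E: "finite E" and "S \<noteq> {}" and cross: "crosses_all_cuts E S"
  shows "card S - 1 \<le> card E"
proof -
  obtain v where v: "v \<in> S"
    using \<open>S \<noteq> {}\<close> by blast
  have tree: "\<exists>T F. T \<subseteq> S \<and> card T = Suc k \<and> F \<subseteq> E \<and> card F = k \<and> (\<forall>e\<in>F. e \<subseteq> T)"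
    if "k < card S" for k
    using that
  proof (induction k)
    case 0
    then show ?case
      using v by (intro exI[of _ "{v}"] exI[of _ "{}"]) auto
  next
    case (Suc k)
    then obtain T F where T: "T \<subseteq> S" "card T = Suc k" and F: "F \<subseteq> E" "card F = k"
      and F_T: "\<forall>e\<in>F. e \<subseteq> T"
      by auto
    have "is_cut S T (S - T)"
      using T Suc.prems by (auto simp: is_cut_def)
    with cross obtain i j where e: "{i, j} \<in> E" "i \<in> T" "j \<in> S - T"
      unfolding crosses_all_cuts_def cross_vars_def by blast
    have "finite T" and "finite F"
      using finite_subset[OF T(1) fin_S] finite_subset[OF F(1) fin_E] .
    moreover have "{i, j} \<notin> F"
      using F_T e by blast
    ultimately show ?case
    proof (intro exI[of _ "insert j T"] exI[of _ "insert {i, j} F"] conjI)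
      show "insert j T \<subseteq> S" and "insert {i, j} F \<subseteq> E" and "\<forall>e\<in>insert {i, j} F. e \<subseteq> insert j T"
        using T F F_T e by auto
    qed (use T F e in simp_all)
  qed
  have "card S - 1 < card S"
    using fin_S \<open>S \<noteq> {}\<close> by (simp add: card_gt_0_iff)
  from tree[OF this] obtain T F where "F \<subseteq> E" and "card F = card S - 1"
    by (elim exE conjE)
  then show ?thesis
    using card_mono[OF fin_E] by metis
qed

text \<open>Every non-constant monomial of a connected series couples the two sides of every cut.\<close>
definition mps_connected :: "'a set \<Rightarrow> 'a set mps \<Rightarrow> bool" where
  "mps_connected S f \<longleftrightarrow> (\<forall>X Y. is_cut S X Y \<longrightarrow> mps_const (mps_zero_vars (cross_vars X Y) f))"

lemma crosses_all_cuts_keys_if_mps_connected: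
  assumes "mps_connected S f" and "m \<noteq> 0" and "f m \<noteq> 0"
  shows "crosses_all_cuts (Poly_Mapping.keys m) S"
  unfolding crosses_all_cuts_def
proof (intro allI impI notI)
  fix X Y
  assume "is_cut S X Y" and "Poly_Mapping.keys m \<inter> cross_vars X Y = {}"
  then have "mps_const (mps_zero_vars (cross_vars X Y) f)"
    and "mps_zero_vars (cross_vars X Y) f m = f m"
    using assms(1) by (simp_all add: mps_connected_def mps_zero_vars_def)
  with assms(2,3) show False
    by (simp add: mps_const_def)
qed

lemma mono_deg_ge_if_mps_connected:
  assumes "finite S" and "S \<noteq> {}" and "mps_connected S f" and "m \<noteq> 0" and "f m \<noteq> 0"
  shows "card S - 1 \<le> mono_deg m"
  using card_le_card_if_crosses_all_cuts[OF assms(1) finite_keys assms(2)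
      crosses_all_cuts_keys_if_mps_connected[OF assms(3-5)]] card_keys_le_mono_deg[of m]
  by linarith

lemma pair_vars_mono: "C \<subseteq> S \<Longrightarrow> pair_vars C \<subseteq> pair_vars S"
  by (auto simp: pair_vars_def)

lemma cross_vars_commute: "cross_vars X Y = cross_vars Y X"
  unfolding cross_vars_def by blast

lemma cross_vars_empty: "cross_vars {} Y = {}"
  by (simp add: cross_vars_def)

lemma cross_vars_inter_pair_vars:
  "cross_vars X Y \<inter> pair_vars C = cross_vars (C \<inter> X) (C \<inter> Y) \<inter> pair_vars C"
  unfolding cross_vars_def pair_vars_def by blast

lemma cross_vars_inter_pair_vars_eq_empty:
  "X \<inter> Y = {} \<Longrightarrow> C \<subseteq> X \<Longrightarrow> cross_vars X Y \<inter> pair_vars C = {}"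
  unfolding cross_vars_def pair_vars_def by blast

lemma mps_const_zero_cross_vars_if_straddles:
  assumes "mps_vars_in (pair_vars C) f" and "mps_connected C f"
    and "C \<subseteq> X \<union> Y" and "X \<inter> Y = {}" and "\<not> C \<subseteq> X" and "\<not> C \<subseteq> Y"
  shows "mps_const (mps_zero_vars (cross_vars X Y) f)"
proof -
  have "mps_zero_vars (cross_vars X Y) f = mps_zero_vars (cross_vars (C \<inter> X) (C \<inter> Y)) f"
    using assms(1) cross_vars_inter_pair_vars by (rule mps_zero_vars_cong)
  moreover have "is_cut C (C \<inter> X) (C \<inter> Y)"
    using assms(3-6) by (auto simp: is_cut_def)
  ultimately show ?thesis
    using assms(2) by (simp add: mps_connected_def)
qed

section \<open>Cluster expansions\<close>

locale cluster_expansion =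
  fixes B :: "'a set" and L Lt :: "'a set \<Rightarrow> 'a set mps"
  assumes finite_B: "finite B"
    and L_vars_in: "S \<subseteq> B \<Longrightarrow> mps_vars_in (pair_vars S) (L S)"
    and L_const_nonzero: "S \<subseteq> B \<Longrightarrow> L S 0 \<noteq> 0"
    and Lt_eq: "S \<subseteq> B \<Longrightarrow> Lt S = mps_div (L S) (mps_prod {C. C \<subset> S} Lt)"
    and L_factor: "S \<subseteq> B \<Longrightarrow> X \<union> Y = S \<Longrightarrow> X \<inter> Y = {} \<Longrightarrow>
      mps_zero_vars (cross_vars X Y) (L S) = mps_mult (L X) (L Y)"
begin

lemma finite_psubsets: "S \<subseteq> B \<Longrightarrow> finite {C. C \<subset> S}"
  by (rule finite_subset[of _ "Pow B"]) (auto simp: finite_B)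

lemma L_empty: "L {} = mps_one"
proof -
  have "mps_zero_vars {} (L {}) = L {}"
    by (simp add: mps_zero_vars_def fun_eq_iff)
  moreover have "mps_zero_vars (cross_vars {} {}) (L {}) = mps_mult (L {}) (L {})"
    by (rule L_factor) auto
  ultimately have "mps_mult (L {}) (L {}) = mps_mult (L {}) mps_one"
    by (simp add: cross_vars_empty mps_mult_one_right)
  with L_const_nonzero[OF empty_subsetI] show ?thesis
    by (rule mps_mult_cancel_left)
qed

lemma Lt_empty: "Lt {} = mps_one"
proof -
  have "mps_inverse mps_one = (mps_one :: 'a set mps)"
    using mps_mult_inverse[of mps_one] by (simp add: mps_one_def mps_mult_one_left)
  moreover have "Lt {} = mps_div (L {}) (mps_prod {} Lt)"
    using Lt_eq[of "{}"] by simp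
  ultimately show ?thesis
    by (simp add: L_empty mps_prod_empty mps_div_def mps_mult_one_left)
qed

lemma Lt_eq_mult_inverse:
  "S \<subseteq> B \<Longrightarrow> Lt S = mps_mult (L S) (mps_inverse (mps_prod_fin.F Lt {C. C \<subset> S}))"
  using Lt_eq finite_psubsets by (simp add: mps_div_def mps_prod_eq_prod_fin)

lemma L_eq_prod_Lt:
  assumes S: "S \<subseteq> B" and nonzero: "\<And>C. C \<subset> S \<Longrightarrow> Lt C 0 \<noteq> 0"
  shows "L S = mps_prod_fin.F Lt (Pow S)"
proof -
  let ?P = "mps_prod_fin.F Lt {C. C \<subset> S}"
  have "?P 0 \<noteq> 0"
    using finite_psubsets[OF S] nonzero by (simp add: mps_prod_fin_at_0)
  have "Pow S = insert S {C. C \<subset> S}"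
    by auto
  then have "mps_prod_fin.F Lt (Pow S) = mps_mult (Lt S) ?P"
    using finite_psubsets[OF S] by simp
  also have "\<dots> = mps_mult (L S) (mps_mult ?P (mps_inverse ?P))"
    unfolding Lt_eq_mult_inverse[OF S] by (simp only: mps_mult_ac)
  also have "\<dots> = L S"
    using mps_mult_inverse[of ?P, OF \<open>?P 0 \<noteq> 0\<close>] by (simp add: mps_mult_one_right)
  finally show ?thesis ..
qed

lemma Lt_const_nonzero_step:
  assumes S: "S \<subseteq> B" and nonzero: "\<And>C. C \<subset> S \<Longrightarrow> Lt C 0 \<noteq> 0"
  shows "Lt S 0 \<noteq> 0"
proof -
  let ?P = "mps_prod_fin.F Lt {C. C \<subset> S}"
  have P0: "?P 0 \<noteq> 0"
    using finite_psubsets[OF S] nonzero by (simp add: mps_prod_fin_at_0)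
  have "?P 0 * mps_inverse ?P 0 = 1"
    using fun_cong[OF mps_mult_inverse[of ?P, OF P0], of 0] by (simp add: mps_mult_at_0 mps_one_def)
  then have "mps_inverse ?P 0 \<noteq> 0"
    by auto
  then show ?thesis
    using L_const_nonzero[OF S] by (simp add: Lt_eq_mult_inverse[OF S] mps_mult_at_0)
qed

lemma Lt_vars_in_step:
  assumes S: "S \<subseteq> B" and nonzero: "\<And>C. C \<subset> S \<Longrightarrow> Lt C 0 \<noteq> 0"
    and vars_in: "\<And>C. C \<subset> S \<Longrightarrow> mps_vars_in (pair_vars C) (Lt C)"
  shows "mps_vars_in (pair_vars S) (Lt S)"
proof -
  let ?P = "mps_prod_fin.F Lt {C. C \<subset> S}"
  have "mps_vars_in (pair_vars S) ?P"
  proof (rule mps_vars_in_prod_fin[OF finite_psubsets[OF S]])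
    fix C assume "C \<in> {C. C \<subset> S}"
    then show "mps_vars_in (pair_vars S) (Lt C)"
      using mps_vars_in_mono[OF vars_in pair_vars_mono] by blast
  qed
  moreover have "?P 0 \<noteq> 0"
    using finite_psubsets[OF S] nonzero by (simp add: mps_prod_fin_at_0)
  ultimately show ?thesis
    unfolding Lt_eq_mult_inverse[OF S] by (intro mps_vars_in_mult L_vars_in S mps_vars_in_inverse)
qed

lemma prod_zero_cross_vars_Lt_Pow:
  assumes X: "X \<subseteq> B" and "X \<inter> Y = {}"
    and nonzero: "\<And>C. C \<subseteq> X \<Longrightarrow> Lt C 0 \<noteq> 0"
    and vars_in: "\<And>C. C \<subseteq> X \<Longrightarrow> mps_vars_in (pair_vars C) (Lt C)"
  shows "mps_prod_fin.F (\<lambda>C. mps_zero_vars (cross_vars X Y) (Lt C)) (Pow X) = L X"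
proof -
  have "mps_prod_fin.F (\<lambda>C. mps_zero_vars (cross_vars X Y) (Lt C)) (Pow X) = mps_prod_fin.F Lt (Pow X)"
    using mps_zero_vars_eq_self[OF vars_in cross_vars_inter_pair_vars_eq_empty[OF \<open>X \<inter> Y = {}\<close>]]
    by (intro mps_prod_fin.cong) auto
  also have "\<dots> = L X"
    using L_eq_prod_Lt[OF X] nonzero by simp
  finally show ?thesis .
qed

text \<open>Cutting the couplings between X and Y in L S = (\<Prod>C \<subseteq> S. Lt C) leaves the factors with
  C \<subseteq> X or C \<subseteq> Y unchanged, and these multiply to L X * L Y.\<close>
lemma zero_cross_vars_L_eq:
  assumes S: "S \<subseteq> B" and "is_cut S X Y"
    and nonzero: "\<And>C. C \<subset> S \<Longrightarrow> Lt C 0 \<noteq> 0"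
    and vars_in: "\<And>C. C \<subset> S \<Longrightarrow> mps_vars_in (pair_vars C) (Lt C)"
  defines "G \<equiv> \<lambda>C. mps_zero_vars (cross_vars X Y) (Lt C)"
  shows "mps_zero_vars (cross_vars X Y) (L S) =
    mps_mult (G S) (mps_mult (mps_mult (L X) (L Y)) (mps_prod_fin.F G (Pow S - (Pow X \<union> Pow Y) - {S})))"
proof -
  define D where "D = Pow S - (Pow X \<union> Pow Y) - {S}"
  have XY: "X \<inter> Y = {}" "X \<subset> S" "Y \<subset> S" "Pow S = insert S ((Pow X \<union> Pow Y) \<union> D)"
    using \<open>is_cut S X Y\<close> by (auto simp: is_cut_def D_def)
  have "finite S"
    using S finite_B by (rule finite_subset)
  then have fin: "finite (Pow X)" "finite (Pow Y)" "finite D"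
    using XY by (auto simp: D_def intro: rev_finite_subset)
  have "mps_zero_vars (cross_vars X Y) (L S) = mps_prod_fin.F G (Pow S)"
    using L_eq_prod_Lt[OF S nonzero] \<open>finite S\<close> by (simp add: G_def mps_zero_vars_prod_fin)
  also have "\<dots> = mps_mult (G S) (mps_prod_fin.F G ((Pow X \<union> Pow Y) \<union> D))"
    unfolding XY(4) by (rule mps_prod_fin.insert) (use fin XY(2,3) in \<open>auto simp: D_def\<close>)
  also have "mps_prod_fin.F G ((Pow X \<union> Pow Y) \<union> D) =
      mps_mult (mps_prod_fin.F G (Pow X \<union> Pow Y)) (mps_prod_fin.F G D)"
    by (rule mps_prod_fin.union_disjoint) (use fin in \<open>auto simp: D_def\<close>)
  also have "mps_prod_fin.F G (Pow X \<union> Pow Y) =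
      mps_mult (mps_prod_fin.F G (Pow X)) (mps_prod_fin.F G (Pow Y))"
  proof -
    have "Pow X \<inter> Pow Y = {{}}"
      using XY by auto
    then show ?thesis
      using mps_prod_fin.union_inter[OF fin(1,2), of G]
      by (simp add: G_def Lt_empty mps_zero_vars_one mps_mult_one_right)
  qed
  also have "mps_prod_fin.F G (Pow X) = L X"
    unfolding G_def using XY S nonzero vars_in Lt_const_nonzero_step
    by (intro prod_zero_cross_vars_Lt_Pow) auto
  also have "mps_prod_fin.F G (Pow Y) = L Y"
    unfolding G_def cross_vars_commute[of X Y] using XY S nonzero vars_in Lt_const_nonzero_step
    by (intro prod_zero_cross_vars_Lt_Pow) auto
  finally show ?thesis
    unfolding D_def .
qed

lemma Lt_connected_step:
  assumes S: "S \<subseteq> B"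
    and nonzero: "\<And>C. C \<subset> S \<Longrightarrow> Lt C 0 \<noteq> 0"
    and vars_in: "\<And>C. C \<subset> S \<Longrightarrow> mps_vars_in (pair_vars C) (Lt C)"
    and connected: "\<And>C. C \<subset> S \<Longrightarrow> mps_connected C (Lt C)"
  shows "mps_connected S (Lt S)"
  unfolding mps_connected_def
proof (intro allI impI)
  fix X Y assume cut: "is_cut S X Y"
  define G where "G C = mps_zero_vars (cross_vars X Y) (Lt C)" for C
  define K where "K = mps_prod_fin.F G (Pow S - (Pow X \<union> Pow Y) - {S})"
  have XY: "X \<union> Y = S" "X \<inter> Y = {}" "X \<subseteq> B" "Y \<subseteq> B"
    using cut S by (auto simp: is_cut_def)
  have LXY_0: "mps_mult (L X) (L Y) 0 \<noteq> 0"
    using L_const_nonzero[OF XY(3)] L_const_nonzero[OF XY(4)] by (simp add: mps_mult_at_0)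
  have "mps_mult (mps_mult (L X) (L Y)) mps_one = mps_zero_vars (cross_vars X Y) (L S)"
    using L_factor[OF S XY(1,2)] by (simp add: mps_mult_one_right)
  also have "\<dots> = mps_mult (G S) (mps_mult (mps_mult (L X) (L Y)) K)"
    unfolding G_def K_def by (rule zero_cross_vars_L_eq[OF S cut nonzero vars_in])
  also have "\<dots> = mps_mult (mps_mult (L X) (L Y)) (mps_mult K (G S))"
    by (simp only: mps_mult_ac)
  finally have "mps_one = mps_mult K (G S)"
    by (rule mps_mult_cancel_left[of "mps_mult (L X) (L Y)", OF LXY_0])
  moreover have "mps_const K"
    unfolding K_def
  proof (rule mps_const_prod_fin)
    show "finite (Pow S - (Pow X \<union> Pow Y) - {S})"
      using finite_subset[OF S finite_B] by simp
    fix C assume C: "C \<in> Pow S - (Pow X \<union> Pow Y) - {S}"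
    then have "C \<subset> S"
      by blast
    then show "mps_const (G C)"
      unfolding G_def using C XY(1,2)
      by (intro mps_const_zero_cross_vars_if_straddles[OF vars_in connected]) auto
  qed
  ultimately have "mps_const (G S)"
    using mps_const_if_mult_const_eq_one by metis
  then show "mps_const (mps_zero_vars (cross_vars X Y) (Lt S))"
    by (simp add: G_def)
qed

lemma Lt_nonzero_vars_in_connected:
  "S \<subseteq> B \<Longrightarrow> Lt S 0 \<noteq> 0 \<and> mps_vars_in (pair_vars S) (Lt S) \<and> mps_connected S (Lt S)"
proof (induction "card S" arbitrary: S rule: less_induct)
  case less
  have IH: "Lt C 0 \<noteq> 0 \<and> mps_vars_in (pair_vars C) (Lt C) \<and> mps_connected C (Lt C)"
    if "C \<subset> S" for C
  proof (rule less.hyps)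
    show "card C < card S"
      using psubset_card_mono[OF finite_subset[OF less.prems finite_B] that] .
    show "C \<subseteq> B"
      using that less.prems by auto
  qed
  then have nonzero: "\<And>C. C \<subset> S \<Longrightarrow> Lt C 0 \<noteq> 0"
    and vars_in: "\<And>C. C \<subset> S \<Longrightarrow> mps_vars_in (pair_vars C) (Lt C)"
    and connected: "\<And>C. C \<subset> S \<Longrightarrow> mps_connected C (Lt C)"
    by simp_all
  show ?case
    using Lt_const_nonzero_step[OF less.prems nonzero] Lt_vars_in_step[OF less.prems nonzero vars_in]
      Lt_connected_step[OF less.prems nonzero vars_in connected]
    by simp
qed

end

theorem theorem1:
  fixes B :: "'a set"
    and L Lt :: "'a set \<Rightarrow> 'a set mps"
  assumes finB: "finite B"
    and vars: "\<And>S. S \<subseteq> B \<Longrightarrow> mps_vars_in (pair_vars S) (L S)"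
    and const: "\<And>S. S \<subseteq> B \<Longrightarrow> L S 0 \<noteq> 0"
    and Lt_def: "\<And>S. S \<subseteq> B \<Longrightarrow> Lt S = mps_div (L S) (mps_prod {C. C \<subset> S} Lt)"
    and factor: "\<And>S X Y. S \<subseteq> B \<Longrightarrow> X \<union> Y = S \<Longrightarrow> X \<inter> Y = {} \<Longrightarrow>
                   mps_zero_vars (cross_vars X Y) (L S) = mps_mult (L X) (L Y)"
  shows "\<And>C. C \<subseteq> B \<Longrightarrow> card C \<ge> 1 \<Longrightarrow>
           \<forall>m. m \<noteq> 0 \<longrightarrow> Lt C m \<noteq> 0 \<longrightarrow> card C - 1 \<le> mono_deg m"
proof -
  interpret cluster_expansion B L Lt
    using assms by unfold_locales
  fix C assume C: "C \<subseteq> B" "card C \<ge> 1"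
  then have "finite C" and "C \<noteq> {}"
    using finite_subset[OF C(1) finB] by auto
  then show "\<forall>m. m \<noteq> 0 \<longrightarrow> Lt C m \<noteq> 0 \<longrightarrow> card C - 1 \<le> mono_deg m"
    using Lt_nonzero_vars_in_connected[OF C(1)] mono_deg_ge_if_mps_connected by blast
qed

end
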